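(* Let $p_1(\lambda),\dots,p_k(\lambda)$ be scalar complex polynomials such that their greatest common divisor $q(\lambda)=\gcd(p_1(\lambda),\dots,p_k(\lambda))$ has simple roots. Then there exists a generic set $\Omega\subseteq\mathbb C^k$ such that for all $s=(s_1,\dots,s_k)\in\Omega$ the roots of the polynomial $s_1p_1(\lambda)+\cdots+s_kp_k(\lambda)$ are simple.
   Context: The greatest common divisor of several polynomials is defined recursively via $\gcd(p_1,\dots,p_k)=\gcd(\gcd(p_1,\dots,p_{k-1}),p_k)$, unique up to a nonzero constant. A set $\Omega\subseteq\mathbb C^k$ is generic if its complement is contained in an algebraic set (common zero set of finitely many polynomials) that is not all of $\mathbb C^k$. *)

theory Defs
  imports "HOL-Analysis.Analysis" "HOL-Computational_Algebra.Polynomial_Factorial" "HOL-Computational_Algebra.Field_as_Ring"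
begin

text \<open>Polynomial functions on C^k, where C^k is rendered as complex^'n
  (k = CARD('n)): the smallest class containing constants and coordinate
  functions, closed under sums and products.\<close>
inductive polyfun :: "((complex^'n) \<Rightarrow> complex) \<Rightarrow> bool" where
  const: "polyfun (\<lambda>x. c)"
| coord: "polyfun (\<lambda>x. x $ i)"
| add: "polyfun f \<Longrightarrow> polyfun g \<Longrightarrow> polyfun (\<lambda>x. f x + g x)"
| mult: "polyfun f \<Longrightarrow> polyfun g \<Longrightarrow> polyfun (\<lambda>x. f x * g x)"

definition algebraic_set :: "(complex^'n) set \<Rightarrow> bool" where
  "algebraic_set A \<longleftrightarrow> (\<exists>F. finite F \<and> (\<forall>f\<in>F. polyfun f) \<and> A = {x. \<forall>f\<in>F. f x = 0})"

definition generic :: "(complex^'n) set \<Rightarrow> bool" where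
  "generic \<Omega> \<longleftrightarrow> (\<exists>A. algebraic_set A \<and> A \<noteq> UNIV \<and> - \<Omega> \<subseteq> A)"

end

theory Submission
  imports Defs "Subresultants.Subresultant_Gcd" "HOL-Computational_Algebra.Fundamental_Theorem_Algebra"
begin

(* Write F s = s_1 p_1 + ... + s_k p_k and let d be the largest degree of the p_i. The coefficient
   of x^d in F s times the resultant of F s and its derivative, computed with the degrees fixed at
   d and d - 1, is a polynomial function of s; it is nonzero exactly where F s has degree d and only
   simple roots, so it suffices to exhibit one such s. The coordinates of s are chosen one at a time:
   for fixed A and B, only finitely many t make A + t B acquire a double root not shared by A and B,
   since every double root of A + t B is a root of the Wronskian A B' - A' B, which does not depend
   on t. The resulting combination only has double roots common to all p_i, i.e. double roots of
   their gcd, and there are none. *)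

(* Jordan_Normal_Form's vector indexing would otherwise shadow the $ of complex^'n. *)
no_notation vec_index (infixl \<open>$\<close> 100)
hide_const (open) Module.smult

lemma finite_pencil_leaving_subspace:
  fixes A B :: "'a::field poly"
  assumes diff: "\<And>X Y. X \<in> V \<Longrightarrow> Y \<in> V \<Longrightarrow> X - Y \<in> V"
    and smult: "\<And>c X. X \<in> V \<Longrightarrow> smult c X \<in> V"
  shows "finite {t. A + smult t B \<in> V \<and> \<not> (A \<in> V \<and> B \<in> V)}" (is "finite ?T")
proof -
  have both: "A \<in> V \<and> B \<in> V"
    if tu: "t \<noteq> u" and t: "A + smult t B \<in> V" and u: "A + smult u B \<in> V" for t u
  proof -
    have "smult (t - u) B \<in> V"
      using diff[OF t u] by (simp add: algebra_simps smult_diff_left)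
    then have B: "B \<in> V"
      using smult[of "smult (t - u) B" "inverse (t - u)"] tu by simp
    have "A = (A + smult t B) - smult t B" by simp
    with diff[OF t smult[OF B]] B show ?thesis by metis
  qed
  have "?T \<subseteq> {t}" if "t \<in> ?T" for t
    using that both by blast
  then show ?thesis
    by (cases "?T = {}") (auto intro: finite_subset)
qed

lemma poly_pderiv_eq_0_if_square_dvd:
  fixes p :: "'a::idom poly"
  assumes "[:-a, 1:]^2 dvd p"
  shows "poly p a = 0 \<and> poly (pderiv p) a = 0"
proof -
  from assms obtain q where "p = [:-a, 1:]^2 * q" by (rule dvdE)
  then have q: "p = [:-a, 1:] * ([:-a, 1:] * q)" by (simp only: power2_eq_square mult.assoc)
  have "pderiv [:-a, 1:] = 1" by (simp add: pderiv_pCons)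
  then have dp: "pderiv p = [:-a, 1:] * (q + pderiv ([:-a, 1:] * q))"
    unfolding q pderiv_mult by (simp only: mult_1 mult_1_right distrib_left add_ac)
  have root: "poly [:-a, 1:] a = 0" by simp
  show ?thesis unfolding dp by (simp only: q poly_mult root mult_zero_left simp_thms)
qed

lemma rsquarefree_iff_no_square_dvd: "rsquarefree p \<longleftrightarrow> (\<forall>a. \<not> [:-a, 1:]^2 dvd p)"
proof -
  have "order a p = 0 \<or> order a p = 1 \<longleftrightarrow> \<not> 2 \<le> order a p" for a by auto
  then show ?thesis unfolding rsquarefree_def order_divides by auto
qed

definition wronskian :: "'a::idom poly \<Rightarrow> 'a poly \<Rightarrow> 'a poly" where
  "wronskian A B = A * pderiv B - pderiv A * B"

lemma wronskian_add_smult_left: "wronskian (A + smult t B) B = wronskian A B"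
  by (simp add: wronskian_def pderiv_add pderiv_smult algebra_simps)

lemma wronskian_eq_0_imp_smult:
  fixes A B :: "'a::field_char_0 poly"
  assumes B: "B \<noteq> 0" and W: "wronskian A B = 0"
  shows "\<exists>c. A = smult c B"
proof -
  obtain x where x: "poly B x \<noteq> 0" using B poly_all_0_iff_0 by blast
  define C where "C = A - smult (poly A x / poly B x) B"
  have WC: "C * pderiv B = pderiv C * B"
    using W by (simp add: C_def wronskian_def pderiv_diff pderiv_smult algebra_simps)
  have Cx: "poly C x = 0" using x by (simp add: C_def)
  have "C = 0"
  proof (rule ccontr)
    assume C: "C \<noteq> 0"
    have "pderiv C \<noteq> 0"
      using C Cx pderiv_iszero by force
    then have nz: "pderiv C * B \<noteq> 0" using B by simp
    have "order x C + order x (pderiv B) = order x (pderiv C) + order x B"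
      using WC order_mult[OF nz] order_mult[of C "pderiv B"] nz by (simp add: WC)
    moreover have "order x B = 0" using x order_root by blast
    moreover have "order x C = Suc (order x (pderiv C))" using order_pderiv[OF C Cx] .
    ultimately show False by simp
  qed
  then show ?thesis unfolding C_def by auto
qed

lemma finite_pencil_new_double_roots:
  fixes A B :: "'a::field_char_0 poly"
  shows "finite {t. \<exists>a. [:-a, 1:]^2 dvd A + smult t B \<and> \<not> ([:-a, 1:]^2 dvd A \<and> [:-a, 1:]^2 dvd B)}"
    (is "finite ?T")
proof (cases "wronskian A B = 0")
  case False
  let ?T\<^sub>a = "\<lambda>a. {t. A + smult t B \<in> {X. [:-a, 1:]^2 dvd X} \<and>
                       \<not> (A \<in> {X. [:-a, 1:]^2 dvd X} \<and> B \<in> {X. [:-a, 1:]^2 dvd X})}"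
  have "?T \<subseteq> (\<Union>a\<in>{a. poly (wronskian A B) a = 0}. ?T\<^sub>a a)"
  proof clarify
    fix t a
    assume "[:-a, 1:]^2 dvd A + smult t B" "\<not> ([:-a, 1:]^2 dvd A \<and> [:-a, 1:]^2 dvd B)"
    moreover from poly_pderiv_eq_0_if_square_dvd[OF this(1)]
    have "poly (wronskian (A + smult t B) B) a = 0"
      by (simp add: wronskian_def)
    ultimately show "t \<in> (\<Union>a\<in>{a. poly (wronskian A B) a = 0}. ?T\<^sub>a a)"
      by (auto simp: wronskian_add_smult_left)
  qed
  moreover have "finite (\<Union>a\<in>{a. poly (wronskian A B) a = 0}. ?T\<^sub>a a)"
    using False by (intro finite_UN_I poly_roots_finite finite_pencil_leaving_subspace)
      (auto simp: dvd_diff dvd_smult)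
  ultimately show ?thesis by (rule finite_subset)
next
  case True
  show ?thesis
  proof (cases "B = 0")
    case False
    with True obtain c where c: "A = smult c B" by (blast dest: wronskian_eq_0_imp_smult)
    have "?T \<subseteq> {-c}"
    proof clarify
      fix t a
      assume dvd: "[:-a, 1:]^2 dvd A + smult t B" and new: "\<not> ([:-a, 1:]^2 dvd A \<and> [:-a, 1:]^2 dvd B)"
      show "t = -c"
      proof (rule ccontr)
        assume "t \<noteq> -c"
        then have "c + t \<noteq> 0" by (simp add: add_eq_0_iff)
        moreover have "A + smult t B = smult (c + t) B" by (simp add: c smult_add_left)
        ultimately have "[:-a, 1:]^2 dvd B" using dvd dvd_smult_cancel by metis
        with new show False by (simp add: c dvd_smult)
      qed
    qed
    then show ?thesis by (rule finite_subset) simp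
  qed simp
qed

lemma ex_combination_in_subspace_only_if_common:
  fixes p :: "'i \<Rightarrow> 'k::field_char_0 poly" and V :: "'b \<Rightarrow> 'k poly set"
  assumes "finite S"
    and pencil: "\<And>A B. finite {t. \<exists>b. A + smult t B \<in> V b \<and> \<not> (A \<in> V b \<and> B \<in> V b)}"
  shows "\<exists>c. \<forall>b. (\<Sum>i\<in>S. smult (c i) (p i)) \<in> V b \<longrightarrow> (\<forall>i\<in>S. p i \<in> V b)"
  using \<open>finite S\<close>
proof (induction S rule: finite_induct)
  case (insert j S)
  then obtain c where c: "\<And>b. (\<Sum>i\<in>S. smult (c i) (p i)) \<in> V b \<Longrightarrow> \<forall>i\<in>S. p i \<in> V b"
    by blast
  define A where "A = (\<Sum>i\<in>S. smult (c i) (p i))"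
  obtain t where t: "t \<notin> {t. \<exists>b. A + smult t (p j) \<in> V b \<and> \<not> (A \<in> V b \<and> p j \<in> V b)}"
    using ex_new_if_finite[OF infinite_UNIV_char_0 pencil] by blast
  have "(\<Sum>i\<in>insert j S. smult ((c(j := t)) i) (p i)) = A + smult t (p j)"
    using insert.hyps unfolding A_def by (auto simp: add.commute intro: sum.cong)
  with t c show ?case
    by (intro exI[of _ "c(j := t)"]) (auto simp: A_def)
qed simp

lemma polyfun_sum:
  assumes "finite A" "\<And>a. a \<in> A \<Longrightarrow> polyfun (f a)"
  shows "polyfun (\<lambda>x. \<Sum>a\<in>A. f a x)"
  using assms by (induction A rule: finite_induct) (auto intro: polyfun.intros)

lemma polyfun_prod:
  assumes "finite A" "\<And>a. a \<in> A \<Longrightarrow> polyfun (f a)"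
  shows "polyfun (\<lambda>x. \<Prod>a\<in>A. f a x)"
  using assms by (induction A rule: finite_induct) (auto intro: polyfun.intros)

lemma polyfun_If: "polyfun f \<Longrightarrow> polyfun g \<Longrightarrow> polyfun (\<lambda>x. if P then f x else g x)"
  by (cases P) auto

lemma polyfun_det:
  assumes "\<And>x. M x \<in> carrier_mat n n"
    and "\<And>i j. i < n \<Longrightarrow> j < n \<Longrightarrow> polyfun (\<lambda>x. M x $$ (i, j))"
  shows "polyfun (\<lambda>x. det (M x))"
proof -
  have "polyfun (\<lambda>x. \<Sum>\<pi> | \<pi> permutes {0..<n}. signof \<pi> * (\<Prod>i = 0..<n. M x $$ (i, \<pi> i)))"
    using assms(2) permutes_in_image
    by (intro polyfun_sum polyfun.mult polyfun.const polyfun_prod) (auto simp: finite_permutations)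
  then show ?thesis by (simp add: Determinant.det_def carrier_matD[OF assms(1)])
qed

lemma polyfun_resultant_sub:
  assumes "\<And>k. polyfun (\<lambda>x. coeff (f x) k)" "\<And>k. polyfun (\<lambda>x. coeff (g x) k)"
  shows "polyfun (\<lambda>x. resultant_sub m n (f x) (g x))"
  unfolding resultant_sub_def
  by (rule polyfun_det[where n = "m + n"])
    (auto simp: sylvester_mat_sub_index intro!: polyfun_If assms polyfun.const)

lemma polyfun_coeff_pderiv:
  assumes "\<And>k. polyfun (\<lambda>x. coeff (f x) k)"
  shows "polyfun (\<lambda>x. coeff (pderiv (f x)) k)"
  using assms by (auto simp: coeff_pderiv intro: polyfun.intros)

lemma polyfun_coeff_linear_combination:
  fixes p :: "'n::finite \<Rightarrow> complex poly"
  shows "polyfun (\<lambda>s. coeff (\<Sum>i\<in>UNIV. smult (s $ i) (p i)) k)"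
  by (auto simp: coeff_sum intro!: polyfun_sum polyfun.intros)

lemma generic_nonvanishing_set:
  assumes "polyfun g" and "g x \<noteq> 0"
  shows "generic {x. g x \<noteq> 0}"
proof -
  have "algebraic_set {x. g x = 0}"
    unfolding algebraic_set_def using \<open>polyfun g\<close> by (intro exI[of _ "{g}"]) auto
  with \<open>g x \<noteq> 0\<close> show ?thesis
    unfolding generic_def by (intro exI[of _ "{x. g x = 0}"]) auto
qed

lemma poly_gcd_eq_0_iff:
  fixes f g :: "'a::field_gcd poly"
  shows "poly (gcd f g) a = 0 \<longleftrightarrow> poly f a = 0 \<and> poly g a = 0"
  by (simp add: poly_eq_0_iff_dvd)

lemma complex_poly_has_root_iff:
  fixes q :: "complex poly"
  assumes "q \<noteq> 0"
  shows "(\<exists>a. poly q a = 0) \<longleftrightarrow> degree q \<noteq> 0"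
proof
  assume "\<exists>a. poly q a = 0"
  then obtain a where a: "poly q a = 0" by blast
  show "degree q \<noteq> 0"
  proof
    assume "degree q = 0"
    then obtain c where "q = [:c:]" by (rule degree_eq_zeroE)
    with assms a show False by simp
  qed
qed (simp add: fundamental_theorem_of_algebra constant_degree)

lemma resultant_pderiv_eq_0_iff:
  fixes f :: "complex poly"
  assumes "f \<noteq> 0"
  shows "resultant f (pderiv f) = 0 \<longleftrightarrow> \<not> rsquarefree f"
proof -
  have "gcd f (pderiv f) \<noteq> 0" using assms by simp
  then have "resultant f (pderiv f) = 0 \<longleftrightarrow> (\<exists>a. poly (gcd f (pderiv f)) a = 0)"
    by (simp add: resultant_0_gcd complex_poly_has_root_iff)
  also have "\<dots> \<longleftrightarrow> \<not> rsquarefree f"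
    by (simp add: poly_gcd_eq_0_iff rsquarefree_roots)
  finally show ?thesis .
qed

lemma resultant_sub_pderiv_eq_0_iff:
  fixes f :: "complex poly"
  assumes "degree f \<le> d" and "coeff f d \<noteq> 0"
  shows "resultant_sub d (d - 1) f (pderiv f) = 0 \<longleftrightarrow> \<not> rsquarefree f"
proof -
  have "degree f = d" using assms by (intro antisym le_degree)
  with assms(2) show ?thesis
    using resultant_pderiv_eq_0_iff[of f] by (auto simp: resultant_sub degree_pderiv)
qed

lemma degree_sum_smult_le_Max:
  fixes p :: "'i::finite \<Rightarrow> 'a::comm_semiring_0 poly"
  shows "degree (\<Sum>i\<in>UNIV. smult (c i) (p i)) \<le> Max (range (\<lambda>i. degree (p i)))"
  by (intro degree_sum_le order_trans[OF degree_smult_le] Max_ge) auto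

lemma ex_coeff_Max_degree_neq_0:
  fixes p :: "'i::finite \<Rightarrow> 'a::zero poly"
  assumes "p i \<noteq> 0"
  shows "\<exists>j. coeff (p j) (Max (range (\<lambda>j. degree (p j)))) \<noteq> 0"
proof -
  let ?d = "Max (range (\<lambda>j. degree (p j)))"
  have "?d \<in> range (\<lambda>j. degree (p j))" by (rule Max_in) auto
  then obtain j where j: "degree (p j) = ?d" by (metis imageE)
  have "degree (p i) \<le> ?d" by (rule Max_ge) auto
  show ?thesis
  proof (cases "p j = 0")
    case True
    with j \<open>degree (p i) \<le> ?d\<close> have "degree (p i) = ?d" by simp
    with assms show ?thesis by (metis leading_coeff_0_iff)
  qed (use j in \<open>metis leading_coeff_0_iff\<close>)
qed

lemma ex_rsquarefree_combination_of_max_degree: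
  fixes p :: "'i::finite \<Rightarrow> complex poly"
  assumes "rsquarefree (Gcd (range p))"
  defines "d \<equiv> Max (range (\<lambda>i. degree (p i)))"
  shows "\<exists>c. rsquarefree (\<Sum>i\<in>UNIV. smult (c i) (p i)) \<and> coeff (\<Sum>i\<in>UNIV. smult (c i) (p i)) d \<noteq> 0"
proof -
  \<comment> \<open>Both defects to avoid, a vanishing top coefficient and a double root at a, are linear conditions.\<close>
  define V where "V b = (case b of None \<Rightarrow> {X. coeff X d = 0} | Some a \<Rightarrow> {X. [:-a, 1:]^2 dvd X})"
    for b :: "complex option"
  have "finite {t. \<exists>b. A + smult t B \<in> V b \<and> \<not> (A \<in> V b \<and> B \<in> V b)}" for A B
    using finite_pencil_new_double_roots[of A B] finite_pencil_leaving_subspace[of "V None" A B]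
    by (simp add: V_def split_option_ex Collect_disj_eq)
  then obtain c where c: "\<And>b. (\<Sum>i\<in>UNIV. smult (c i) (p i)) \<in> V b \<Longrightarrow> \<forall>i. p i \<in> V b"
    using ex_combination_in_subspace_only_if_common[of UNIV V p] by auto
  have "\<not> [:-a, 1:]^2 dvd (\<Sum>i\<in>UNIV. smult (c i) (p i))" for a
  proof
    assume "[:-a, 1:]^2 dvd (\<Sum>i\<in>UNIV. smult (c i) (p i))"
    then have "[:-a, 1:]^2 dvd Gcd (range p)"
      using c[of "Some a"] by (auto simp: V_def intro: Gcd_greatest)
    with assms(1) show False by (simp add: rsquarefree_iff_no_square_dvd)
  qed
  moreover have "coeff (\<Sum>i\<in>UNIV. smult (c i) (p i)) d \<noteq> 0"
  proof
    assume "coeff (\<Sum>i\<in>UNIV. smult (c i) (p i)) d = 0"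
    then have "\<forall>i. coeff (p i) d = 0" using c[of None] by (simp add: V_def)
    moreover have "Gcd (range p) \<noteq> 0" using assms(1) by (simp add: rsquarefree_def)
    then obtain i where "p i \<noteq> 0" by (auto simp: Gcd_0_iff)
    ultimately show False using ex_coeff_Max_degree_neq_0 unfolding d_def by blast
  qed
  ultimately show ?thesis by (auto simp: rsquarefree_iff_no_square_dvd)
qed

theorem lemmaA1:
  fixes p :: "'n::finite \<Rightarrow> complex poly"
  assumes "rsquarefree (Gcd (range p))"
  shows "\<exists>\<Omega>. generic \<Omega> \<and> (\<forall>s\<in>\<Omega>. rsquarefree (\<Sum>i\<in>UNIV. smult (s $ i) (p i)))"
proof -
  define d where "d = Max (range (\<lambda>i. degree (p i)))"
  define F where "F s = (\<Sum>i\<in>UNIV. smult (s $ i) (p i))" for s :: "complex^'n"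
  \<comment> \<open>With the degrees fixed, the resultant is a determinant in the coefficients of F s.\<close>
  define g where "g s = coeff (F s) d * resultant_sub d (d - 1) (F s) (pderiv (F s))" for s
  have "polyfun g"
    unfolding g_def F_def
    by (intro polyfun.mult polyfun_resultant_sub polyfun_coeff_pderiv polyfun_coeff_linear_combination)
  have g_neq_0_iff: "g s \<noteq> 0 \<longleftrightarrow> coeff (F s) d \<noteq> 0 \<and> rsquarefree (F s)" for s
    using resultant_sub_pderiv_eq_0_iff[OF degree_sum_smult_le_Max] by (auto simp: g_def F_def d_def)
  obtain c where "rsquarefree (\<Sum>i\<in>UNIV. smult (c i) (p i))" "coeff (\<Sum>i\<in>UNIV. smult (c i) (p i)) d \<noteq> 0"
    using ex_rsquarefree_combination_of_max_degree[OF assms] unfolding d_def by blast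
  then have "g (\<chi> i. c i) \<noteq> 0" by (simp add: g_neq_0_iff F_def)
  with \<open>polyfun g\<close> have "generic {s. g s \<noteq> 0}" by (rule generic_nonvanishing_set)
  then show ?thesis by (auto simp: g_neq_0_iff F_def)
qed

end
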